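(* There is no circulant weighing matrix $CW(143,36)$.
   Context: A circulant weighing matrix $CW(n,k)$ is an $n\times n$ circulant matrix $W$ (each row after the first is the right cyclic shift of the previous row) with all entries in $\{0,1,-1\}$ such that $WW^T=kI_n$. *)

theory Defs
  imports Main
begin

definition is_circulant :: "nat \<Rightarrow> (nat \<Rightarrow> nat \<Rightarrow> int) \<Rightarrow> bool" where
  "is_circulant n W \<longleftrightarrow>
     (\<forall>i < n. \<forall>j < n. W i j = W 0 ((j + n - i) mod n))"

definition is_CW :: "nat \<Rightarrow> nat \<Rightarrow> (nat \<Rightarrow> nat \<Rightarrow> int) \<Rightarrow> bool" where
  "is_CW n k W \<longleftrightarrow>
     is_circulant n W \<and>
     (\<forall>i < n. \<forall>j < n. W i j \<in> {0, 1, -1}) \<and>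
     (\<forall>i < n. \<forall>j < n. (\<Sum>l<n. W i l * W j l) = (if i = j then int k else 0))"

end

theory Submission
  imports Defs "HOL-Computational_Algebra.Polynomial" "HOL-Computational_Algebra.Primes"
begin

definition cyc_cong :: "int \<Rightarrow> nat \<Rightarrow> int poly \<Rightarrow> int poly \<Rightarrow> bool" where
  "cyc_cong m n P Q \<longleftrightarrow> (\<exists>R S. P - Q = smult m R + (monom 1 n - 1) * S)"

syntax "_cyc_cong" :: "int poly \<Rightarrow> int poly \<Rightarrow> int \<Rightarrow> nat \<Rightarrow> bool"
    ("(1[_ = _] '(' mod _, _'))")
translations "[P = Q] (mod m, n)" \<rightleftharpoons> "CONST cyc_cong m n P Q"

lemma cyc_cong_refl [simp]: "[P = P] (mod m, n)"
  unfolding cyc_cong_def by (rule exI[of _ 0], rule exI[of _ 0]) simp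

lemma cyc_cong_iff_diff: "[P = Q] (mod m, n) \<longleftrightarrow> [P - Q = 0] (mod m, n)"
  unfolding cyc_cong_def by simp

lemma cyc_cong_add:
  assumes "[P = Q] (mod m, n)" "[P' = Q'] (mod m, n)"
  shows "[P + P' = Q + Q'] (mod m, n)"
proof -
  obtain R S R' S' where "P - Q = smult m R + (monom 1 n - 1) * S"
    and "P' - Q' = smult m R' + (monom 1 n - 1) * S'"
    using assms unfolding cyc_cong_def by blast
  then have "P + P' - (Q + Q') = smult m (R + R') + (monom 1 n - 1) * (S + S')"
    by (simp add: algebra_simps smult_add_right)
  then show ?thesis
    unfolding cyc_cong_def by blast
qed

lemma cyc_cong_mult_right:
  assumes "[P = Q] (mod m, n)"
  shows "[P * Z = Q * Z] (mod m, n)"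
proof -
  obtain R S where "P - Q = smult m R + (monom 1 n - 1) * S"
    using assms unfolding cyc_cong_def by blast
  then have "P * Z - Q * Z = smult m (R * Z) + (monom 1 n - 1) * (S * Z)"
    by (metis distrib_right left_diff_distrib mult.assoc mult_smult_left)
  then show ?thesis
    unfolding cyc_cong_def by blast
qed

lemma cyc_cong_sym:
  assumes "[P = Q] (mod m, n)"
  shows "[Q = P] (mod m, n)"
proof -
  obtain R S where PQ: "P - Q = smult m R + (monom 1 n - 1) * S"
    using assms unfolding cyc_cong_def by blast
  have "Q - P = - (P - Q)"
    by simp
  also have "\<dots> = smult m (- R) + (monom 1 n - 1) * (- S)"
    unfolding PQ by simp
  finally show ?thesis
    unfolding cyc_cong_def by blast
qed

lemma cyc_cong_trans [trans]:
  assumes "[P = Q] (mod m, n)" "[Q = Z] (mod m, n)"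
  shows "[P = Z] (mod m, n)"
proof -
  obtain R S R' S' where PQ: "P - Q = smult m R + (monom 1 n - 1) * S"
    and QZ: "Q - Z = smult m R' + (monom 1 n - 1) * S'"
    using assms unfolding cyc_cong_def by blast
  have "P - Z = (P - Q) + (Q - Z)"
    by simp
  also have "\<dots> = smult m (R + R') + (monom 1 n - 1) * (S + S')"
    unfolding PQ QZ by (simp add: algebra_simps smult_add_right)
  finally show ?thesis
    unfolding cyc_cong_def by blast
qed

lemma cyc_cong_mult:
  "[P = Q] (mod m, n) \<Longrightarrow> [P' = Q'] (mod m, n) \<Longrightarrow> [P * P' = Q * Q'] (mod m, n)"
  by (metis cyc_cong_mult_right cyc_cong_trans mult.commute)

lemma cyc_cong_uminus: "[P = Q] (mod m, n) \<Longrightarrow> [- P = - Q] (mod m, n)"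
  using cyc_cong_mult_right[of m n P Q "-1"] by simp

lemma cyc_cong_diff:
  "[P = Q] (mod m, n) \<Longrightarrow> [P' = Q'] (mod m, n) \<Longrightarrow> [P - P' = Q - Q'] (mod m, n)"
  by (metis cyc_cong_add cyc_cong_uminus diff_conv_add_uminus)

lemma cyc_cong_power: "[P = Q] (mod m, n) \<Longrightarrow> [P ^ k = Q ^ k] (mod m, n)"
  by (induction k) (auto intro: cyc_cong_mult)

lemma cyc_cong_smult: "[P = Q] (mod m, n) \<Longrightarrow> [smult c P = smult c Q] (mod m, n)"
  using cyc_cong_mult_right[of m n P Q "[:c:]"] by (simp add: mult.commute)

lemma cyc_cong_sum:
  "(\<And>i. i \<in> A \<Longrightarrow> [f i = g i] (mod m, n)) \<Longrightarrow> [sum f A = sum g A] (mod m, n)"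
  by (induction A rule: infinite_finite_induct) (auto intro: cyc_cong_add)

lemma cyc_cong_mult_zero_right: "[P = 0] (mod m, n) \<Longrightarrow> [P * Q = 0] (mod m, n)"
  using cyc_cong_mult_right[of m n P 0 Q] by simp

lemma cyc_cong_mult_zero_left: "[P = 0] (mod m, n) \<Longrightarrow> [Q * P = 0] (mod m, n)"
  using cyc_cong_mult_zero_right[of m n P Q] by (simp add: mult.commute)

lemma cyc_cong_smult_modulus [simp]: "[smult m P = 0] (mod m, n)"
  unfolding cyc_cong_def by (rule exI[of _ P], rule exI[of _ 0]) simp

lemma cyc_cong_modulus_dvd: "d dvd m \<Longrightarrow> [P = Q] (mod m, n) \<Longrightarrow> [P = Q] (mod d, n)"
  unfolding cyc_cong_def by (metis dvdE smult_smult)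

lemma cyc_cong_mult_zero:
  assumes "[P = 0] (mod a, n)" "[Q = 0] (mod b, n)"
  shows "[P * Q = 0] (mod a * b, n)"
proof -
  obtain R S R' S' where P: "P = smult a R + (monom 1 n - 1) * S"
    and Q: "Q = smult b R' + (monom 1 n - 1) * S'"
    using assms unfolding cyc_cong_def by (metis diff_zero)
  have "P * Q = smult (a * b) (R * R')
      + (monom 1 n - 1) * (S * smult b R' + smult a R * S' + (monom 1 n - 1) * S * S')"
    unfolding P Q by (simp add: algebra_simps smult_add_right smult_diff_right)
  then show ?thesis
    unfolding cyc_cong_def by (metis diff_zero)
qed

lemma cyc_cong_coprime_modulus:
  assumes "coprime a b" "[P = 0] (mod a, n)" "[P = 0] (mod b, n)"
  shows "[P = 0] (mod a * b, n)"
proof -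
  obtain u v where uv: "u * a + v * b = 1"
    using bezout_int[of a b] assms(1) by (auto simp: coprime_iff_gcd_eq_1)
  obtain R S R' S' where P: "P = smult a R + (monom 1 n - 1) * S"
    and P': "P = smult b R' + (monom 1 n - 1) * S'"
    using assms(2,3) unfolding cyc_cong_def by (metis diff_zero)
  have "P = smult (u * a) P + smult (v * b) P"
    by (simp flip: smult_add_left add: uv)
  also have "\<dots> = smult (u * a) (smult b R' + (monom 1 n - 1) * S')
      + smult (v * b) (smult a R + (monom 1 n - 1) * S)"
    using P P' by metis
  also have "\<dots> = smult (a * b) (smult u R' + smult v R)
      + (monom 1 n - 1) * (smult (u * a) S' + smult (v * b) S)"
    by (simp add: algebra_simps smult_add_right smult_diff_right)
  finally show ?thesis
    unfolding cyc_cong_def by (metis diff_zero)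
qed

lemma cyc_cong_X_power_order: "[monom 1 n = 1] (mod m, n)"
  unfolding cyc_cong_def by (rule exI[of _ 0], rule exI[of _ 1]) simp

lemma cyc_cong_monom_mod: "[monom c k = monom c (k mod n)] (mod m, n)"
proof -
  have "monom c k = monom c (k mod n) * monom 1 n ^ (k div n)"
    by (simp add: monom_power mult_monom)
  also have "[\<dots> = monom c (k mod n) * 1 ^ (k div n)] (mod m, n)"
    by (intro cyc_cong_mult cyc_cong_power cyc_cong_refl cyc_cong_X_power_order)
  finally show ?thesis
    by simp
qed

lemma cyc_cong_monom_eq_mod: "a mod n = b mod n \<Longrightarrow> [monom c a = monom c b] (mod m, n)"
  by (metis cyc_cong_monom_mod cyc_cong_sym cyc_cong_trans)

lemma cyc_cong_order_dvd:
  assumes "d dvd n" "[P = Q] (mod m, n)"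
  shows "[P = Q] (mod m, d)"
proof -
  obtain R S where PQ: "P - Q = smult m R + (monom 1 n - 1) * S"
    using assms(2) unfolding cyc_cong_def by blast
  have "[monom 1 n = monom 1 0] (mod 0, d)"
    using assms(1) by (intro cyc_cong_monom_eq_mod) simp
  then have "[monom 1 n - 1 = 1 - 1] (mod 0, d)"
    by (intro cyc_cong_diff) (simp_all add: monom_eq_1)
  then obtain T :: "int poly" where "monom 1 n - 1 = (monom 1 d - 1) * T"
    by (auto simp: cyc_cong_def)
  with PQ have "P - Q = smult m R + (monom 1 d - 1) * (T * S)"
    by (simp add: mult.assoc)
  then show ?thesis
    unfolding cyc_cong_def by blast
qed

definition dilate :: "nat \<Rightarrow> int poly \<Rightarrow> int poly" where
  "dilate t P = pcompose P (monom 1 t)"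

lemma pcompose_monom: "pcompose (monom c k) Q = smult c (Q ^ k)"
  by (induction k) (auto simp: monom_Suc pcompose_pCons monom_0)

lemma dilate_monom [simp]: "dilate t (monom c k) = monom c (k * t)"
  unfolding dilate_def pcompose_monom by (simp add: monom_power smult_monom mult.commute)

lemma dilate_dilate: "dilate s (dilate t P) = dilate (t * s) P"
  unfolding dilate_def by (simp add: pcompose_assoc[symmetric] pcompose_monom monom_power mult.commute)

lemma dilate_add [simp]: "dilate t (P + Q) = dilate t P + dilate t Q"
  by (simp add: dilate_def pcompose_add)

lemma dilate_diff [simp]: "dilate t (P - Q) = dilate t P - dilate t Q"
  by (simp add: dilate_def pcompose_diff)

lemma dilate_mult [simp]: "dilate t (P * Q) = dilate t P * dilate t Q"
  by (simp add: dilate_def pcompose_mult)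

lemma dilate_smult [simp]: "dilate t (smult c P) = smult c (dilate t P)"
  by (simp add: dilate_def pcompose_smult)

lemma dilate_const [simp]: "dilate t [:c:] = [:c:]"
  by (simp add: dilate_def)

lemma dilate_1 [simp]: "dilate t 1 = 1"
  by (simp add: dilate_def pcompose_1)

lemma dilate_0 [simp]: "dilate t 0 = 0"
  by (simp add: dilate_def)

lemma dilate_power [simp]: "dilate t (P ^ k) = dilate t P ^ k"
  by (induction k) auto

lemma dilate_sum: "dilate t (sum f A) = (\<Sum>i\<in>A. dilate t (f i))"
  by (simp add: dilate_def pcompose_sum)

lemma dilate_Suc_0 [simp]: "dilate (Suc 0) P = P"
  by (simp add: dilate_def monom_Suc monom_0)

lemma cyc_cong_dilate: "[P = Q] (mod m, n) \<Longrightarrow> [dilate t P = dilate t Q] (mod m, n)"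
proof -
  assume "[P = Q] (mod m, n)"
  then obtain R S where PQ: "P - Q = smult m R + (monom 1 n - 1) * S"
    unfolding cyc_cong_def by blast
  have "[monom 1 (n * t) = monom 1 0] (mod 0, n)"
    by (intro cyc_cong_monom_eq_mod) simp
  then have "[monom 1 (n * t) - 1 = 1 - 1] (mod 0, n)"
    by (intro cyc_cong_diff) (simp_all add: monom_eq_1)
  then obtain T :: "int poly" where T: "monom 1 (n * t) - 1 = (monom 1 n - 1) * T"
    by (auto simp: cyc_cong_def)
  have "dilate t P - dilate t Q = smult m (dilate t R) + (monom 1 n - 1) * (T * dilate t S)"
    using arg_cong[OF PQ, of "dilate t"] T by (simp add: mult.assoc)
  then show ?thesis
    unfolding cyc_cong_def by blast
qed

lemma cyc_cong_dilate_mod: "s mod n = t mod n \<Longrightarrow> [dilate s P = dilate t P] (mod m, n)"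
  unfolding dilate_def
  by (induction P) (auto simp: pcompose_pCons intro!: cyc_cong_add cyc_cong_mult cyc_cong_monom_eq_mod)

definition cyc_conj :: "nat \<Rightarrow> int poly \<Rightarrow> int poly" where
  "cyc_conj n P = dilate (n - 1) P"

lemma cyc_conj_simps [simp]:
  "cyc_conj n (P * Q) = cyc_conj n P * cyc_conj n Q"
  "cyc_conj n (P + Q) = cyc_conj n P + cyc_conj n Q"
  "cyc_conj n (P - Q) = cyc_conj n P - cyc_conj n Q"
  "cyc_conj n (smult c P) = smult c (cyc_conj n P)"
  "cyc_conj n (P ^ k) = cyc_conj n P ^ k"
  "cyc_conj n [:c:] = [:c:]"
  "cyc_conj n 1 = 1"
  "cyc_conj n 0 = 0"
  by (simp_all add: cyc_conj_def)

lemma cyc_cong_cyc_conj: "[P = Q] (mod m, n') \<Longrightarrow> [cyc_conj n P = cyc_conj n Q] (mod m, n')"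
  unfolding cyc_conj_def by (rule cyc_cong_dilate)

lemma dilate_cyc_conj: "dilate t (cyc_conj n P) = cyc_conj n (dilate t P)"
  unfolding cyc_conj_def by (simp add: dilate_dilate mult.commute)

lemma cyc_cong_cyc_conj_cyc_conj:
  assumes "0 < n"
  shows "[cyc_conj n (cyc_conj n P) = P] (mod m, n)"
proof -
  have "(n - 1) * (n - 1) mod n = 1 mod n"
  proof (cases "n = 1")
    case False
    with assms have "(n - 1) * (n - 1) = 1 + n * (n - 2)"
      by (cases n) (auto simp: algebra_simps)
    then show ?thesis
      by (metis mod_mult_self2 mult.commute)
  qed simp
  then show ?thesis
    using cyc_cong_dilate_mod[of "(n - 1) * (n - 1)" n 1 m P]
    by (simp add: cyc_conj_def dilate_dilate)
qed

lemma cyc_cong_cyc_conj_order_dvd: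
  assumes "a dvd n" "0 < n"
  shows "[cyc_conj n P = cyc_conj a P] (mod m, a)"
proof -
  obtain k where "n = a * k" "0 < a" "0 < k"
    using assms by (auto elim!: dvdE)
  then have "n - 1 = (a - 1) + a * (k - 1)"
    by (cases k) (auto simp: algebra_simps)
  then have "(n - 1) mod a = (a - 1) mod a"
    by simp
  then show ?thesis
    unfolding cyc_conj_def by (rule cyc_cong_dilate_mod)
qed

lemma add_power_prime_eq:
  fixes x y :: "'a::comm_ring_1"
  assumes "prime p"
  obtains r where "(x + y) ^ p = x ^ p + y ^ p + of_nat p * r"
proof -
  have p: "0 < p"
    using assms prime_gt_0_nat by blast
  define r where "r = (\<Sum>k\<in>{1..<p}. of_nat ((p choose k) div p) * x ^ k * y ^ (p - k))"
  have "of_nat p * r = (\<Sum>k\<in>{1..<p}. of_nat (p choose k) * x ^ k * y ^ (p - k))"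
    unfolding r_def sum_distrib_left
  proof (intro sum.cong refl)
    fix k assume "k \<in> {1..<p}"
    then have "p * ((p choose k) div p) = p choose k"
      using dvd_choose_prime[of k p] assms by simp
    then show "of_nat p * (of_nat ((p choose k) div p) * x ^ k * y ^ (p - k))
        = of_nat (p choose k) * x ^ k * y ^ (p - k)"
      by (metis mult.assoc of_nat_mult)
  qed
  moreover have "{..p} = insert p (insert 0 {1..<p})"
    using p by auto
  then have "(x + y) ^ p = x ^ p + y ^ p + (\<Sum>k\<in>{1..<p}. of_nat (p choose k) * x ^ k * y ^ (p - k))"
    using p by (simp add: binomial_ring add.assoc)
  ultimately show ?thesis
    by (intro that[of r]) simp
qed

lemma prime_dvd_power_self_diff:
  fixes a :: int
  assumes "prime p"
  shows "int p dvd a ^ p - a"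
proof -
  have nonneg: "int p dvd int k ^ p - int k" for k
  proof (induction k)
    case 0
    then show ?case
      using assms prime_gt_0_nat by (simp add: power_0_left)
  next
    case (Suc k)
    obtain r where "(int k + 1) ^ p = int k ^ p + 1 ^ p + int p * r"
      using add_power_prime_eq[OF assms] by metis
    then have "(int k + 1) ^ p - (int k + 1) = (int k ^ p - int k) + int p * r"
      by simp
    then have "int p dvd (int k + 1) ^ p - (int k + 1)"
      by (simp only:) (rule dvd_add[OF Suc.IH dvd_triv_left])
    then show ?case
      by (simp only: of_nat_Suc add.commute)
  qed
  show ?thesis
  proof (cases "0 \<le> a")
    case True
    then show ?thesis
      using nonneg[of "nat a"] by simp
  next
    case False
    then obtain k where a: "a = - int k"
      by (intro that[of "nat (- a)"]) simp
    obtain r where "(int k + - int k) ^ p = int k ^ p + (- int k) ^ p + int p * r"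
      using add_power_prime_eq[OF assms] by metis
    then have "a ^ p - a = - (int k ^ p - int k) - int p * r"
      using assms prime_gt_0_nat unfolding a by (simp add: power_0_left algebra_simps)
    moreover have "int p dvd - (int k ^ p - int k) - int p * r"
      using nonneg[of k] by (intro dvd_diff) (simp_all add: dvd_diff_commute)
    ultimately show ?thesis
      by (simp only:)
  qed
qed

lemma cyc_cong_power_prime:
  assumes "prime p"
  shows "[P ^ p = dilate p P] (mod int p, n)"
proof (induction P)
  case 0
  then show ?case
    using assms prime_gt_0_nat by (simp add: power_0_left)
next
  case (pCons a Q)
  obtain r where r: "([:a:] + monom 1 1 * Q) ^ p = [:a:] ^ p + (monom 1 1 * Q) ^ p + of_nat p * r"
    using add_power_prime_eq[OF assms] by metis
  obtain c where c: "a ^ p - a = int p * c"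
    using prime_dvd_power_self_diff[OF assms] by (metis dvdE)
  have "[:a:] ^ p - [:a:] = smult (int p) [:c:]"
    using c by (simp add: poly_const_pow)
  then have "[[:a:] ^ p = [:a:]] (mod int p, n)"
    by (subst cyc_cong_iff_diff) (simp only: cyc_cong_smult_modulus)
  moreover have "[(monom 1 1 * Q) ^ p = monom 1 p * dilate p Q] (mod int p, n)"
    using pCons.IH by (simp add: power_mult_distrib monom_power cyc_cong_mult)
  moreover have "[of_nat p * r = 0] (mod int p, n)"
    using cyc_cong_smult_modulus[of "int p" n r] by (simp add: of_nat_poly)
  ultimately have "[([:a:] + monom 1 1 * Q) ^ p = [:a:] + monom 1 p * dilate p Q + 0] (mod int p, n)"
    unfolding r by (intro cyc_cong_add)
  moreover have "pCons a Q = [:a:] + monom 1 1 * Q"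
    by (simp add: monom_Suc monom_0)
  moreover have "dilate p (pCons a Q) = [:a:] + monom 1 p * dilate p Q"
    by (simp add: dilate_def pcompose_pCons)
  ultimately show ?case
    by simp
qed

lemma cyc_cong_power_prime_power:
  assumes "prime p"
  shows "[P ^ (p ^ k) = dilate (p ^ k) P] (mod int p, n)"
proof (induction k)
  case (Suc k)
  have "P ^ (p ^ Suc k) = (P ^ (p ^ k)) ^ p"
    by (simp add: power_mult[symmetric] mult.commute)
  also have "[\<dots> = dilate (p ^ k) P ^ p] (mod int p, n)"
    by (rule cyc_cong_power[OF Suc.IH])
  also have "[\<dots> = dilate p (dilate (p ^ k) P)] (mod int p, n)"
    by (rule cyc_cong_power_prime[OF assms])
  also have "\<dots> = dilate (p ^ Suc k) P"
    by (simp add: dilate_dilate mult.commute)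
  finally show ?case .
qed simp

lemma cyc_cong_idempotent_lift:
  assumes "[e * e = e] (mod m, n)"
  defines "E \<equiv> 3 * e\<^sup>2 - 2 * e ^ 3"
  shows "[E * E = E] (mod m * m, n)" and "[E = e] (mod m, n)"
proof -
  have z: "[e * e - e = 0] (mod m, n)"
    using assms(1) by (simp flip: cyc_cong_iff_diff)
  have "E * E - E = ((e * e - e) * (e * e - e)) * (4 * e\<^sup>2 - 4 * e - 3)"
    unfolding E_def by algebra
  moreover have "[((e * e - e) * (e * e - e)) * (4 * e\<^sup>2 - 4 * e - 3) = 0] (mod m * m, n)"
    by (intro cyc_cong_mult_zero_right cyc_cong_mult_zero z)
  ultimately have "[E * E - E = 0] (mod m * m, n)"
    by simp
  then show "[E * E = E] (mod m * m, n)"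
    by (rule cyc_cong_iff_diff[THEN iffD2])
  have "E - e = (e * e - e) * (1 - 2 * e)"
    unfolding E_def by algebra
  moreover have "[(e * e - e) * (1 - 2 * e) = 0] (mod m, n)"
    by (intro cyc_cong_mult_zero_right z)
  ultimately have "[E - e = 0] (mod m, n)"
    by simp
  then show "[E = e] (mod m, n)"
    by (rule cyc_cong_iff_diff[THEN iffD2])
qed

lemma cyc_cong_idempotent_unique:
  assumes x: "[x * x = x] (mod m * m, n)" and y: "[y * y = y] (mod m * m, n)"
    and xy: "[x = y] (mod m, n)"
  shows "[x = y] (mod m * m, n)"
proof -
  have "(x - y) * (x - y) * (x - y) = (x * x) * x - 3 * ((x * x) * y) + 3 * (x * (y * y)) - (y * y) * y"
    by algebra
  also have "[\<dots> = x * x - 3 * (x * y) + 3 * (x * y) - y * y] (mod m * m, n)"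
    by (intro cyc_cong_diff cyc_cong_add cyc_cong_mult cyc_cong_refl x y)
  also have "[\<dots> = x - 3 * (x * y) + 3 * (x * y) - y] (mod m * m, n)"
    by (intro cyc_cong_diff cyc_cong_add cyc_cong_mult cyc_cong_refl x y)
  finally have "[(x - y) * (x - y) * (x - y) = x - y] (mod m * m, n)"
    by simp
  moreover have "[(x - y) * (x - y) * (x - y) = 0] (mod m * m, n)"
    using xy by (intro cyc_cong_mult_zero_right cyc_cong_mult_zero) (simp_all flip: cyc_cong_iff_diff)
  ultimately have "[x - y = 0] (mod m * m, n)"
    using cyc_cong_sym cyc_cong_trans by blast
  then show ?thesis
    by (rule cyc_cong_iff_diff[THEN iffD2])
qed

lemma cyc_cong_idempotent_power:
  assumes "[e * e = e] (mod m, n)" "0 < k"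
  shows "[e ^ k = e] (mod m, n)"
  using assms(2)
proof (induction k rule: nat_induct_non_zero)
  case (Suc k)
  have "e ^ Suc k = e * e ^ k"
    by simp
  also have "[\<dots> = e * e] (mod m, n)"
    by (intro cyc_cong_mult cyc_cong_refl Suc.IH)
  finally show ?case
    using assms(1) by (rule cyc_cong_trans)
qed simp

lemma cyc_cong_idempotent_multiple:
  assumes E: "[E * E = E] (mod m * m, n)" and AW: "[A * W = E] (mod m, n)"
  obtains V where "[A * V = E] (mod m * m, n)"
proof -
  define d where "d = A * W * E - E"
  have "[A * W * E = E * E] (mod m, n)"
    by (intro cyc_cong_mult AW cyc_cong_refl)
  also have "[E * E = E] (mod m, n)"
    using cyc_cong_modulus_dvd[OF dvd_triv_left E] .
  finally have d: "[d = 0] (mod m, n)"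
    unfolding d_def by (rule cyc_cong_iff_diff[THEN iffD1])
  have "A * (W * E * (E - d)) = E * E - d * d"
    unfolding d_def by (simp add: algebra_simps)
  also have "[\<dots> = E - 0] (mod m * m, n)"
    by (intro cyc_cong_diff E cyc_cong_mult_zero d)
  finally show ?thesis
    using that by simp
qed

lemma multiplier_idempotent_mod_prime:
  assumes p: "prime p" and f: "0 < f" "p ^ f mod n = 1 mod n" and t: "t mod n = p ^ j mod n"
    and A: "[A * cyc_conj n A = 0] (mod int p, n)"
  obtains e W where "[e * e = e] (mod int p, n)" "[A * e = A] (mod int p, n)"
    "[e * cyc_conj n e = 0] (mod int p, n)" "[dilate t e = e] (mod int p, n)" "A * W = e"
proof -
  define q where "q = p ^ f"
  have "p ^ 1 \<le> q"
    unfolding q_def using f(1) prime_gt_0_nat[OF p] by (intro power_increasing) auto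
  then have q: "2 \<le> q"
    using prime_ge_2_nat[OF p] by simp
  have frobenius: "[P ^ q = P] (mod int p, n)" for P
  proof -
    have "[P ^ q = dilate q P] (mod int p, n)"
      unfolding q_def by (rule cyc_cong_power_prime_power[OF p])
    also have "[dilate q P = dilate 1 P] (mod int p, n)"
      using f(2) unfolding q_def by (intro cyc_cong_dilate_mod) simp
    finally show ?thesis
      by simp
  qed
  obtain r where r: "q = Suc (Suc r)"
    using q by (metis add_2_eq_Suc le_Suc_ex)
  define W where "W = A ^ r"
  define e where "e = A * W"
  have power_q: "A * e = A ^ q" "e * e = A ^ q * W"
    unfolding e_def W_def r by (simp_all add: mult_ac power_add[symmetric])
  show ?thesis
  proof (rule that[of e W])
    show "[A * e = A] (mod int p, n)"
      unfolding power_q by (rule frobenius)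
    have "[A ^ q * W = A * W] (mod int p, n)"
      by (intro cyc_cong_mult frobenius cyc_cong_refl)
    then show idem: "[e * e = e] (mod int p, n)"
      unfolding power_q(2) by (simp only: e_def)
    have "e * cyc_conj n e = (A * cyc_conj n A) ^ (q - 1)"
      unfolding e_def W_def r by (simp add: power_mult_distrib mult_ac)
    also have "[\<dots> = 0 ^ (q - 1)] (mod int p, n)"
      by (intro cyc_cong_power A)
    finally show "[e * cyc_conj n e = 0] (mod int p, n)"
      unfolding r by simp
    have "[dilate t e = dilate (p ^ j) e] (mod int p, n)"
      using t by (rule cyc_cong_dilate_mod)
    also have "[\<dots> = e ^ (p ^ j)] (mod int p, n)"
      by (rule cyc_cong_sym[OF cyc_cong_power_prime_power[OF p]])
    also have "[\<dots> = e] (mod int p, n)"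
      using idem p prime_gt_0_nat by (intro cyc_cong_idempotent_power) auto
    finally show "[dilate t e = e] (mod int p, n)" .
  qed (simp add: e_def)
qed

lemma multiplier_idempotent_lift:
  assumes A: "[A * cyc_conj n A = 0] (mod m * m, n)"
    and e: "[e * e = e] (mod m, n)" "[A * e = A] (mod m, n)" "[e * cyc_conj n e = 0] (mod m, n)"
      "[dilate t e = e] (mod m, n)" "A * W = e"
  obtains E where "[E * E = E] (mod m * m, n)" "[E * cyc_conj n E = 0] (mod m * m, n)"
    "[dilate t E = E] (mod m * m, n)" "[cyc_conj n A * E = 0] (mod m * m, n)"
    "[A * (1 - E - cyc_conj n E) = 0] (mod m, n)"
proof -
  define E where "E = 3 * e\<^sup>2 - 2 * e ^ 3"
  have EE: "[E * E = E] (mod m * m, n)" and Ee: "[E = e] (mod m, n)"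
    using cyc_cong_idempotent_lift[OF e(1)] unfolding E_def by auto
  show ?thesis
  proof (rule that[of E])
    show "[E * E = E] (mod m * m, n)"
      by (rule EE)
    have "[E * cyc_conj n E = e * cyc_conj n e] (mod m, n)"
      by (intro cyc_cong_mult cyc_cong_cyc_conj Ee)
    then have orth: "[E * cyc_conj n E = 0] (mod m, n)"
      using e(3) by (rule cyc_cong_trans)
    have "[E * cyc_conj n E = (E * E) * cyc_conj n (E * E)] (mod m * m, n)"
      by (intro cyc_cong_mult cyc_cong_cyc_conj cyc_cong_sym[OF EE])
    also have "(E * E) * cyc_conj n (E * E) = (E * cyc_conj n E) * (E * cyc_conj n E)"
      by (simp add: mult_ac)
    also have "[\<dots> = 0] (mod m * m, n)"
      by (intro cyc_cong_mult_zero orth)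
    finally show "[E * cyc_conj n E = 0] (mod m * m, n)" .
    show "[dilate t E = E] (mod m * m, n)"
    proof (rule cyc_cong_idempotent_unique)
      show "[dilate t E * dilate t E = dilate t E] (mod m * m, n)"
        using cyc_cong_dilate[OF EE, of t] by simp
      have "[dilate t E = dilate t e] (mod m, n)"
        by (rule cyc_cong_dilate[OF Ee])
      also have "[\<dots> = e] (mod m, n)"
        by (rule e(4))
      also have "[e = E] (mod m, n)"
        by (rule cyc_cong_sym[OF Ee])
      finally show "[dilate t E = E] (mod m, n)" .
    qed (rule EE)
    have "[A * W = E] (mod m, n)"
      unfolding e(5) by (rule cyc_cong_sym[OF Ee])
    then obtain V where AV: "[A * V = E] (mod m * m, n)"
      using cyc_cong_idempotent_multiple[OF EE] by blast
    have "[cyc_conj n A * E = cyc_conj n A * (E * E)] (mod m * m, n)"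
      by (intro cyc_cong_mult cyc_cong_refl cyc_cong_sym[OF EE])
    also have "[\<dots> = cyc_conj n A * (E * (A * V))] (mod m * m, n)"
      by (intro cyc_cong_mult cyc_cong_refl cyc_cong_sym[OF AV])
    also have "cyc_conj n A * (E * (A * V)) = (A * cyc_conj n A) * (E * V)"
      by (simp add: mult_ac)
    also have "[\<dots> = 0] (mod m * m, n)"
      by (rule cyc_cong_mult_zero_right[OF A])
    finally show "[cyc_conj n A * E = 0] (mod m * m, n)" .
    have "[A * cyc_conj n e = (A * e) * cyc_conj n e] (mod m, n)"
      by (intro cyc_cong_mult cyc_cong_refl cyc_cong_sym[OF e(2)])
    also have "(A * e) * cyc_conj n e = A * (e * cyc_conj n e)"
      by (simp add: mult_ac)
    also have "[\<dots> = 0] (mod m, n)"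
      by (rule cyc_cong_mult_zero_left[OF e(3)])
    finally have Ae': "[A * cyc_conj n e = 0] (mod m, n)" .
    have "[A * (1 - E - cyc_conj n E) = A * 1 - A * e - A * cyc_conj n e] (mod m, n)"
      unfolding right_diff_distrib
      by (intro cyc_cong_diff cyc_cong_mult cyc_cong_refl cyc_cong_cyc_conj Ee)
    also have "[\<dots> = A - A - 0] (mod m, n)"
      by (intro cyc_cong_diff e(2) Ae') simp
    finally show "[A * (1 - E - cyc_conj n E) = 0] (mod m, n)"
      by simp
  qed
qed

lemma cyc_cong_complement_idempotent:
  assumes "[E * E = E] (mod m, n)" "[E' * E' = E'] (mod m, n)" "[E * E' = 0] (mod m, n)"
  shows "[(1 - E - E') * (1 - E - E') = 1 - E - E'] (mod m, n)"
proof -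
  have "(1 - E - E') * (1 - E - E') = 1 - E - E' + (E * E - E) + (E' * E' - E') + 2 * (E * E')"
    by algebra
  also have "[\<dots> = 1 - E - E' + 0 + 0 + 2 * 0] (mod m, n)"
    using assms by (intro cyc_cong_add cyc_cong_mult cyc_cong_refl) (simp_all flip: cyc_cong_iff_diff)
  finally show ?thesis
    by simp
qed

lemma multiplier_from_idempotent:
  assumes n: "0 < n"
    and E: "[E * E = E] (mod m * m, n)" "[E * cyc_conj n E = 0] (mod m * m, n)"
      "[dilate t E = E] (mod m * m, n)"
    and A: "[cyc_conj n A * E = 0] (mod m * m, n)" "[A * (1 - E - cyc_conj n E) = 0] (mod m, n)"
  shows "[dilate t A * cyc_conj n A = 0] (mod m * m, n)"
proof -
  define E' where "E' = cyc_conj n E"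
  define F where "F = 1 - E - E'"
  define C where "C = dilate t A * cyc_conj n A"
  have "[A * E' = cyc_conj n (cyc_conj n A) * E'] (mod m * m, n)"
    by (intro cyc_cong_mult cyc_cong_refl cyc_cong_sym[OF cyc_cong_cyc_conj_cyc_conj[OF n]])
  also have "cyc_conj n (cyc_conj n A) * E' = cyc_conj n (cyc_conj n A * E)"
    by (simp add: E'_def)
  also have "[\<dots> = cyc_conj n 0] (mod m * m, n)"
    by (rule cyc_cong_cyc_conj[OF A(1)])
  finally have AE': "[A * E' = 0] (mod m * m, n)"
    by simp
  have E't: "[dilate t E' = E'] (mod m * m, n)"
    unfolding E'_def dilate_cyc_conj by (rule cyc_cong_cyc_conj[OF E(3)])
  have FF: "[F * F = F] (mod m * m, n)"
    unfolding F_def E'_def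
    using cyc_cong_cyc_conj[OF E(1), of n] E(1,2) by (intro cyc_cong_complement_idempotent) simp_all
  have Ft: "[dilate t F = F] (mod m * m, n)"
    unfolding F_def by (simp, intro cyc_cong_diff cyc_cong_refl E(3) E't)
  have "cyc_conj n F = 1 - E' - cyc_conj n (cyc_conj n E)"
    unfolding F_def E'_def by simp
  also have "[\<dots> = 1 - E' - E] (mod m * m, n)"
    by (intro cyc_cong_diff cyc_cong_refl cyc_cong_cyc_conj_cyc_conj n)
  finally have Fc: "[cyc_conj n F = F] (mod m * m, n)"
    unfolding F_def by (simp add: algebra_simps)
  have CE: "[C * E = 0] (mod m * m, n)"
    unfolding C_def mult.assoc by (rule cyc_cong_mult_zero_left[OF A(1)])
  have "C * E' = dilate t A * E' * cyc_conj n A"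
    unfolding C_def by (simp add: mult_ac)
  also have "[\<dots> = dilate t A * dilate t E' * cyc_conj n A] (mod m * m, n)"
    by (intro cyc_cong_mult cyc_cong_refl cyc_cong_sym[OF E't])
  also have "dilate t A * dilate t E' * cyc_conj n A = dilate t (A * E') * cyc_conj n A"
    by simp
  also have "[\<dots> = dilate t 0 * cyc_conj n A] (mod m * m, n)"
    by (intro cyc_cong_mult cyc_cong_refl cyc_cong_dilate AE')
  finally have CE': "[C * E' = 0] (mod m * m, n)"
    by simp
  have "[C * F = C * (F * F)] (mod m * m, n)"
    by (intro cyc_cong_mult cyc_cong_refl cyc_cong_sym[OF FF])
  also have "C * (F * F) = (dilate t A * F) * (cyc_conj n A * F)"
    unfolding C_def by (simp add: mult_ac)
  also have "[\<dots> = (dilate t A * dilate t F) * (cyc_conj n A * cyc_conj n F)] (mod m * m, n)"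
    by (intro cyc_cong_mult cyc_cong_refl cyc_cong_sym[OF Ft] cyc_cong_sym[OF Fc])
  also have "\<dots> = dilate t (A * F) * cyc_conj n (A * F)"
    by simp
  also have "[\<dots> = 0] (mod m * m, n)"
    using cyc_cong_dilate[OF A(2), of t] cyc_cong_cyc_conj[OF A(2), of n]
    unfolding F_def E'_def by (intro cyc_cong_mult_zero) simp_all
  finally have CF: "[C * F = 0] (mod m * m, n)" .
  have "C = C * E + C * E' + C * F"
    unfolding F_def by (simp add: algebra_simps)
  also have "[\<dots> = 0 + 0 + 0] (mod m * m, n)"
    by (intro cyc_cong_add CE CE' CF)
  finally show ?thesis
    unfolding C_def by simp
qed

theorem multiplier_mod_prime_square:
  assumes p: "prime p" and n: "0 < n" and f: "0 < f" "p ^ f mod n = 1 mod n"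
    and t: "t mod n = p ^ j mod n"
    and A: "[A * cyc_conj n A = 0] (mod int p * int p, n)"
  shows "[dilate t A * cyc_conj n A = 0] (mod int p * int p, n)"
proof -
  obtain e W where e: "[e * e = e] (mod int p, n)" "[A * e = A] (mod int p, n)"
    "[e * cyc_conj n e = 0] (mod int p, n)" "[dilate t e = e] (mod int p, n)" "A * W = e"
    using multiplier_idempotent_mod_prime[OF p f t cyc_cong_modulus_dvd[OF dvd_triv_left A]] .
  obtain E where "[E * E = E] (mod int p * int p, n)" "[E * cyc_conj n E = 0] (mod int p * int p, n)"
    "[dilate t E = E] (mod int p * int p, n)" "[cyc_conj n A * E = 0] (mod int p * int p, n)"
    "[A * (1 - E - cyc_conj n E) = 0] (mod int p, n)"
    using multiplier_idempotent_lift[OF A e] .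
  then show ?thesis
    by (rule multiplier_from_idempotent[OF n])
qed

definition cyc_poly :: "nat \<Rightarrow> (nat \<Rightarrow> int) \<Rightarrow> int poly" where
  "cyc_poly n c = (\<Sum>k<n. monom (c k) k)"

lemma coeff_cyc_poly: "coeff (cyc_poly n c) k = (if k < n then c k else 0)"
  unfolding cyc_poly_def by (simp add: coeff_sum coeff_monom)

lemma cyc_poly_cong: "(\<And>k. k < n \<Longrightarrow> c k = d k) \<Longrightarrow> cyc_poly n c = cyc_poly n d"
  unfolding cyc_poly_def by (intro sum.cong) auto

lemma cyc_poly_const: "0 < n \<Longrightarrow> cyc_poly n (\<lambda>k. if k = 0 then K else 0) = [:K:]"
  by (rule poly_eqI) (simp add: coeff_cyc_poly coeff_pCons split: nat.split)

lemma cyc_poly_zero: "cyc_poly n (\<lambda>_. 0) = 0"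
  by (simp add: cyc_poly_def)

lemma smult_cyc_poly: "smult a (cyc_poly n c) = cyc_poly n (\<lambda>k. a * c k)"
  by (rule poly_eqI) (simp add: coeff_cyc_poly)

lemma cyc_cong_cyc_poly_exists:
  assumes "0 < n"
  obtains c where "[P = cyc_poly n c] (mod 0, n)"
proof -
  define R where "R = (\<Sum>i\<le>degree P. monom (coeff P i) (i mod n))"
  have "P = (\<Sum>i\<le>degree P. monom (coeff P i) i)"
    by (rule poly_as_sum_of_monoms[symmetric])
  also have "[\<dots> = R] (mod 0, n)"
    unfolding R_def by (intro cyc_cong_sum cyc_cong_monom_mod)
  also have "R = cyc_poly n (coeff R)"
  proof (rule poly_eqI)
    fix k
    have "coeff R k = 0" if "n \<le> k"
    proof -
      have "i mod n \<noteq> k" for i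
        using mod_less_divisor[OF assms, of i] that by linarith
      then show ?thesis
        by (simp add: R_def coeff_sum coeff_monom)
    qed
    then show "coeff R k = coeff (cyc_poly n (coeff R)) k"
      by (simp add: coeff_cyc_poly)
  qed
  finally show ?thesis
    by (rule that)
qed

lemma degree_X_power_minus_1: "0 < n \<Longrightarrow> degree (monom 1 n - 1 :: int poly) = n"
  by (rule order_antisym[OF degree_le le_degree]) (auto simp: coeff_monom)

lemma multiple_of_X_power_minus_1_degree:
  assumes "0 < n" "degree ((monom 1 n - 1) * T :: int poly) < n"
  shows "(monom 1 n - 1) * T = 0"
proof (rule ccontr)
  assume "(monom 1 n - 1) * T \<noteq> 0"
  then have "degree ((monom 1 n - 1) * T) = n + degree T"
    using degree_X_power_minus_1[OF assms(1)] by (subst degree_mult_eq) auto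
  with assms(2) show False
    by simp
qed

lemma cyc_cong_cyc_poly_coeff:
  assumes n: "0 < n" and H: "[cyc_poly n c = cyc_poly n d] (mod m, n)" and k: "k < n"
  shows "m dvd c k - d k"
proof -
  obtain R S where RS: "cyc_poly n c - cyc_poly n d = smult m R + (monom 1 n - 1) * S"
    using H unfolding cyc_cong_def by blast
  obtain r where "[R = cyc_poly n r] (mod 0, n)"
    using cyc_cong_cyc_poly_exists[OF n] .
  then obtain S' where S': "R - cyc_poly n r = (monom 1 n - 1) * S'"
    by (auto simp: cyc_cong_def)
  define D where "D = cyc_poly n c - cyc_poly n d - smult m (cyc_poly n r)"
  have "D = smult m (R - cyc_poly n r) + (monom 1 n - 1) * S"
    unfolding D_def RS by (simp add: smult_diff_right)
  also have "\<dots> = (monom 1 n - 1) * (S + smult m S')"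
    unfolding S' by (simp add: algebra_simps smult_diff_right)
  finally have "D = (monom 1 n - 1) * (S + smult m S')" .
  moreover have "degree D < n"
    using n unfolding D_def
    by (intro degree_lessI) (auto simp: coeff_cyc_poly)
  ultimately have "D = 0"
    using multiple_of_X_power_minus_1_degree[OF n] by simp
  then have "coeff (cyc_poly n c - cyc_poly n d) k = coeff (smult m (cyc_poly n r)) k"
    unfolding D_def by simp
  then show ?thesis
    using k by (simp add: coeff_cyc_poly)
qed

lemma cyc_cong_cyc_poly_eq:
  "0 < n \<Longrightarrow> [cyc_poly n c = cyc_poly n d] (mod 0, n) \<Longrightarrow> k < n \<Longrightarrow> c k = d k"
  using cyc_cong_cyc_poly_coeff[of n 0 c d k] by simp

lemma cyc_cong_smult_cancel:
  assumes n: "0 < n" and a: "a \<noteq> 0" and H: "[smult a P = 0] (mod 0, n)"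
  shows "[P = 0] (mod 0, n)"
proof -
  obtain r where r: "[P = cyc_poly n r] (mod 0, n)"
    using cyc_cong_cyc_poly_exists[OF n] .
  have "[cyc_poly n (\<lambda>k. a * r k) = cyc_poly n (\<lambda>_. 0)] (mod 0, n)"
    using cyc_cong_trans[OF cyc_cong_sym[OF cyc_cong_smult[OF r]] H]
    by (simp add: smult_cyc_poly cyc_poly_zero)
  note coeffs = cyc_cong_cyc_poly_eq[OF n this]
  have "r k = 0" if "k < n" for k
    using coeffs[OF that] a by simp
  then have "cyc_poly n r = 0"
    by (simp add: cyc_poly_def)
  with r show ?thesis
    by simp
qed

definition periodic_autocorr :: "nat \<Rightarrow> (nat \<Rightarrow> int) \<Rightarrow> nat \<Rightarrow> int" where
  "periodic_autocorr n c d = (\<Sum>j<n. c j * c ((j + d) mod n))"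

lemma cyc_poly_mult_cyc_conj:
  assumes n: "0 < n"
  shows "[cyc_poly n c * cyc_conj n (cyc_poly n c) = cyc_poly n (periodic_autocorr n c)] (mod 0, n)"
proof -
  have shift: "(\<Sum>i<n. monom (c i * c j) ((i + j * (n - 1)) mod n))
      = (\<Sum>d<n. monom (c ((d + j) mod n) * c j) d)" for j
  proof -
    have jn: "j * (n - 1) + j = j * n" "j + j * (n - 1) = j * n"
      using n by (cases n; simp add: algebra_simps)+
    show ?thesis
      by (rule sum.reindex_bij_witness[where i = "\<lambda>d. (d + j) mod n" and j = "\<lambda>i. (i + j * (n - 1)) mod n"])
        (use n in \<open>auto simp: mod_add_left_eq add.assoc jn[unfolded One_nat_def]\<close>)
  qed
  have "cyc_poly n c * cyc_conj n (cyc_poly n c) = (\<Sum>j<n. \<Sum>i<n. monom (c i * c j) (i + j * (n - 1)))"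
    unfolding cyc_poly_def cyc_conj_def dilate_sum
    by (simp add: sum_distrib_left sum_distrib_right mult_monom)
  also have "[\<dots> = (\<Sum>j<n. \<Sum>i<n. monom (c i * c j) ((i + j * (n - 1)) mod n))] (mod 0, n)"
    by (intro cyc_cong_sum cyc_cong_monom_mod)
  also have "\<dots> = (\<Sum>d<n. \<Sum>j<n. monom (c ((d + j) mod n) * c j) d)"
    unfolding shift by (rule sum.swap)
  also have "\<dots> = cyc_poly n (periodic_autocorr n c)"
    unfolding cyc_poly_def periodic_autocorr_def by (simp add: monom_sum mult.commute add.commute)
  finally show ?thesis .
qed

lemma periodic_autocorr_eq:
  assumes n: "0 < n" and H: "[cyc_poly n c * cyc_conj n (cyc_poly n c) = [:K:]] (mod 0, n)"
    and d: "d < n"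
  shows "periodic_autocorr n c d = (if d = 0 then K else 0)"
proof -
  have "[cyc_poly n (periodic_autocorr n c) = cyc_poly n (\<lambda>k. if k = 0 then K else 0)] (mod 0, n)"
    using cyc_cong_trans[OF cyc_cong_sym[OF cyc_poly_mult_cyc_conj[OF n]] H]
    by (simp add: cyc_poly_const[OF n])
  then show ?thesis
    using cyc_cong_cyc_poly_eq[OF n _ d] by blast
qed

lemma is_CW_row_poly:
  assumes W: "is_CW n k W" and n: "0 < n"
  shows "[cyc_poly n (W 0) * cyc_conj n (cyc_poly n (W 0)) = [:int k:]] (mod 0, n)"
proof -
  have circ: "\<And>i j. i < n \<Longrightarrow> j < n \<Longrightarrow> W i j = W 0 ((j + n - i) mod n)"
    and orth: "\<And>i j. i < n \<Longrightarrow> j < n \<Longrightarrow> (\<Sum>l<n. W i l * W j l) = (if i = j then int k else 0)"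
    using W unfolding is_CW_def is_circulant_def by blast+
  have "periodic_autocorr n (W 0) d = (if d = 0 then int k else 0)" if d: "d < n" for d
  proof -
    define i where "i = (n - d) mod n"
    have i: "i < n"
      using n by (simp add: i_def)
    have "W i l = W 0 ((l + d) mod n)" if "l < n" for l
    proof (cases "d = 0")
      case False
      then have "l + n - i = l + d"
        using d by (simp add: i_def)
      then show ?thesis
        using circ[OF i that] by simp
    qed (use circ[OF i that] n in \<open>simp add: i_def\<close>)
    then have "periodic_autocorr n (W 0) d = (\<Sum>l<n. W 0 l * W i l)"
      unfolding periodic_autocorr_def by (intro sum.cong) simp_all
    also have "\<dots> = (if 0 = i then int k else 0)"
      by (rule orth[OF n i])
    also have "(0 = i) \<longleftrightarrow> d = 0"
    proof (cases "d = 0")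
      case False
      then have "i = n - d"
        using d by (simp add: i_def)
      with False d show ?thesis
        by simp
    qed (simp add: i_def)
    finally show ?thesis .
  qed
  then have "cyc_poly n (periodic_autocorr n (W 0)) = [:int k:]"
    using cyc_poly_cong[of n "periodic_autocorr n (W 0)"] cyc_poly_const[OF n] by simp
  then show ?thesis
    using cyc_poly_mult_cyc_conj[OF n, of "W 0"] by simp
qed

lemma cyc_cong_cyc_poly_fold:
  assumes "0 < a"
  shows "[cyc_poly n c = cyc_poly a (\<lambda>y. \<Sum>i<n. if i mod a = y then c i else 0)] (mod 0, a)"
proof -
  have "[cyc_poly n c = (\<Sum>i<n. monom (c i) (i mod a))] (mod 0, a)"
    unfolding cyc_poly_def by (intro cyc_cong_sum cyc_cong_monom_mod)
  also have "(\<Sum>i<n. monom (c i) (i mod a)) = cyc_poly a (\<lambda>y. \<Sum>i<n. if i mod a = y then c i else 0)"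
    using assms by (intro poly_eqI) (auto simp: coeff_sum coeff_monom coeff_cyc_poly intro!: sum.neutral)
  finally show ?thesis .
qed

lemma projection_energy:
  assumes a: "a dvd n" "0 < a" and n: "0 < n"
    and H: "[cyc_poly n c * cyc_conj n (cyc_poly n c) = [:K:]] (mod 0, n)"
  shows "(\<Sum>y<a. (\<Sum>i<n. if i mod a = y then c i else 0)\<^sup>2) = K"
proof -
  define S where "S y = (\<Sum>i<n. if i mod a = y then c i else 0)" for y
  have fold: "[cyc_poly n c = cyc_poly a S] (mod 0, a)"
    unfolding S_def by (rule cyc_cong_cyc_poly_fold[OF a(2)])
  have "[cyc_poly a S * cyc_conj a (cyc_poly a S) = cyc_poly n c * cyc_conj n (cyc_poly n c)] (mod 0, a)"
  proof (intro cyc_cong_mult cyc_cong_sym[OF fold])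
    have "[cyc_conj n (cyc_poly n c) = cyc_conj a (cyc_poly n c)] (mod 0, a)"
      by (rule cyc_cong_cyc_conj_order_dvd[OF a(1) n])
    also have "[\<dots> = cyc_conj a (cyc_poly a S)] (mod 0, a)"
      by (rule cyc_cong_cyc_conj[OF fold])
    finally show "[cyc_conj a (cyc_poly a S) = cyc_conj n (cyc_poly n c)] (mod 0, a)"
      by (rule cyc_cong_sym)
  qed
  also have "[\<dots> = [:K:]] (mod 0, a)"
    by (rule cyc_cong_order_dvd[OF a(1) H])
  finally have "periodic_autocorr a S 0 = K"
    using periodic_autocorr_eq[OF a(2)] a(2) by simp
  then show ?thesis
    by (simp add: periodic_autocorr_def S_def power2_eq_square)
qed

lemma sum_squares_eq_1:
  fixes u :: "nat \<Rightarrow> int"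
  assumes "(\<Sum>j<n. u j * u j) = 1"
  obtains g where "g < n" "u g = 1 \<or> u g = -1" "\<And>j. j < n \<Longrightarrow> j \<noteq> g \<Longrightarrow> u j = 0"
proof -
  obtain g where g: "g < n" "u g \<noteq> 0"
    using assms by (metis (no_types, lifting) mult_zero_left sum.neutral zero_neq_one lessThan_iff)
  have split: "(\<Sum>j<n. u j * u j) = u g * u g + (\<Sum>j\<in>{..<n} - {g}. u j * u j)"
    using g(1) by (simp add: sum.remove)
  have rest_nonneg: "0 \<le> (\<Sum>j\<in>{..<n} - {g}. u j * u j)"
    by (intro sum_nonneg) simp
  have "0 < u g * u g"
    using g(2) by (cases "0 < u g") (auto simp: mult_neg_neg linorder_neq_iff)
  then have "1 \<le> u g * u g"
    by linarith
  then have ug: "u g * u g = 1" and rest: "(\<Sum>j\<in>{..<n} - {g}. u j * u j) = 0"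
    using split rest_nonneg assms by linarith+
  show ?thesis
  proof (rule that[OF g(1)])
    show "u g = 1 \<or> u g = -1"
      using ug by (simp only: square_eq_1_iff)
    show "u j = 0" if "j < n" "j \<noteq> g" for j
      using rest that sum_nonneg_eq_0_iff[of "{..<n} - {g}" "\<lambda>j. u j * u j"] by simp
  qed
qed

lemma cyc_cong_unit_monomial:
  assumes n: "0 < n" and U: "[U * cyc_conj n U = 1] (mod 0, n)"
  obtains s g where "s = 1 \<or> s = -1" "g < n" "[U = monom s g] (mod 0, n)"
proof -
  obtain u where u: "[U = cyc_poly n u] (mod 0, n)"
    using cyc_cong_cyc_poly_exists[OF n] .
  have "[cyc_poly n u * cyc_conj n (cyc_poly n u) = U * cyc_conj n U] (mod 0, n)"
    by (intro cyc_cong_mult cyc_cong_cyc_conj cyc_cong_sym[OF u])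
  also have "[\<dots> = [:1:]] (mod 0, n)"
    using U by (simp add: one_pCons)
  finally have "periodic_autocorr n u 0 = 1"
    using periodic_autocorr_eq[OF n] n by simp
  then obtain g where g: "g < n" "u g = 1 \<or> u g = -1" "\<And>j. j < n \<Longrightarrow> j \<noteq> g \<Longrightarrow> u j = 0"
    using sum_squares_eq_1 unfolding periodic_autocorr_def by auto
  have "cyc_poly n u = monom (u g) g"
    unfolding cyc_poly_def using g by (subst sum.remove[of _ g]) (auto intro!: sum.neutral)
  with u show ?thesis
    using that[OF g(2,1)] by simp
qed

lemma cyc_cong_dilate_cyc_poly:
  assumes n: "0 < n" and inverse: "t * t' mod n = 1 mod n"
  shows "[dilate t (cyc_poly n c) = cyc_poly n (\<lambda>i. c (t' * i mod n))] (mod 0, n)"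
proof -
  have cancel: "k * t * t' mod n = k" if "k < n" for k
  proof -
    have "k * t * t' mod n = k * (t * t' mod n) mod n"
      by (simp add: mod_mult_right_eq mult.assoc)
    also have "\<dots> = k"
      using that by (simp add: inverse mod_mult_right_eq)
    finally show ?thesis .
  qed
  have left_inverse: "t' * (k * t mod n) mod n = k" if "k < n" for k
    using cancel[OF that] by (simp add: mod_mult_right_eq mult.commute)
  have right_inverse: "t' * i mod n * t mod n = i" if "i < n" for i
    using cancel[OF that] by (simp add: mod_mult_right_eq mult_ac)
  have "dilate t (cyc_poly n c) = (\<Sum>k<n. monom (c k) (k * t))"
    unfolding cyc_poly_def by (simp add: dilate_sum)
  also have "[\<dots> = (\<Sum>k<n. monom (c k) (k * t mod n))] (mod 0, n)"
    by (intro cyc_cong_sum cyc_cong_monom_mod)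
  also have "\<dots> = cyc_poly n (\<lambda>i. c (t' * i mod n))"
    unfolding cyc_poly_def
    by (rule sum.reindex_bij_witness[where i = "\<lambda>i. t' * i mod n" and j = "\<lambda>k. k * t mod n"])
      (use n in \<open>auto simp: left_inverse right_inverse\<close>)
  finally show ?thesis .
qed

lemma cyc_cong_monom_mult_cyc_poly:
  assumes n: "0 < n" and h: "h < n"
  shows "[monom 1 h * cyc_poly n c = cyc_poly n (\<lambda>i. c ((i + (n - h)) mod n))] (mod 0, n)"
proof -
  have left_inverse: "((k + h) mod n + (n - h)) mod n = k" if "k < n" for k
  proof -
    have "k + h + (n - h) = k + n"
      using h by simp
    then show ?thesis
      using that by (simp only: mod_add_left_eq) simp
  qed
  have right_inverse: "((i + (n - h)) mod n + h) mod n = i" if "i < n" for i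
  proof -
    have "i + (n - h) + h = i + n"
      using h by simp
    then show ?thesis
      using that by (simp only: mod_add_left_eq) simp
  qed
  have "monom 1 h * cyc_poly n c = (\<Sum>k<n. monom (c k) (k + h))"
    unfolding cyc_poly_def by (simp add: sum_distrib_left mult_monom add.commute)
  also have "[\<dots> = (\<Sum>k<n. monom (c k) ((k + h) mod n))] (mod 0, n)"
    by (intro cyc_cong_sum cyc_cong_monom_mod)
  also have "\<dots> = cyc_poly n (\<lambda>i. c ((i + (n - h)) mod n))"
    unfolding cyc_poly_def
    by (rule sum.reindex_bij_witness[where i = "\<lambda>i. (i + (n - h)) mod n" and j = "\<lambda>k. (k + h) mod n"])
      (use n in \<open>auto simp: left_inverse right_inverse\<close>)
  finally show ?thesis .
qed

lemma mult_invariant_iterate: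
  fixes n c i :: nat and b :: "nat \<Rightarrow> 'a::monoid_mult"
  assumes n: "0 < n" and inv: "\<And>i. i < n \<Longrightarrow> b (c * i mod n) = s * b i" and i: "i < n"
  shows "b (c ^ k * i mod n) = s ^ k * b i"
proof (induction k)
  case (Suc k)
  have "c ^ Suc k * i mod n = c * (c ^ k * i) mod n"
    by (simp only: power_Suc mult.assoc)
  also have "\<dots> = c * (c ^ k * i mod n) mod n"
    by (rule mod_mult_right_eq[symmetric])
  finally show ?case
    using inv[of "c ^ k * i mod n"] n Suc.IH by (simp add: mult.assoc)
qed (use i in simp)

lemma cyc_cong_const_multiple: "[P = [:m * c:]] (mod 0, n) \<Longrightarrow> [P = 0] (mod m, n)"
  using cyc_cong_trans[OF cyc_cong_modulus_dvd[of m 0] cyc_cong_smult_modulus[of m n "[:c:]"]]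
  by simp

lemma multiplier_fixes_translate:
  assumes A: "[dilate t A = monom s g * A] (mod 0, n)" and h: "(h * t + g) mod n = h mod n"
  shows "[dilate t (monom 1 h * A) = smult s (monom 1 h * A)] (mod 0, n)"
proof -
  have "dilate t (monom 1 h * A) = monom 1 (h * t) * dilate t A"
    by simp
  also have "[\<dots> = monom 1 (h * t) * (monom s g * A)] (mod 0, n)"
    by (intro cyc_cong_mult cyc_cong_refl A)
  also have "monom 1 (h * t) * (monom s g * A) = monom s (h * t + g) * A"
    by (simp add: mult_monom mult.assoc[symmetric])
  also have "[\<dots> = monom s h * A] (mod 0, n)"
    by (intro cyc_cong_mult cyc_cong_refl cyc_cong_monom_eq_mod h)
  also have "monom s h * A = smult s (monom 1 h * A)"
    by (simp only: mult_smult_left[symmetric] smult_monom mult.right_neutral)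
  finally show ?thesis .
qed

lemma CW_143_36_multiplier_3:
  assumes A: "[A * cyc_conj 143 A = [:36:]] (mod 0, 143)"
  shows "[dilate 3 A * cyc_conj 143 A = 0] (mod 36, 143)"
proof -
  have "[dilate 3 A * cyc_conj 143 A = 0] (mod int 2 * int 2, 143)"
    using A by (intro multiplier_mod_prime_square[where f = 60 and j = 28])
      (auto intro: cyc_cong_const_multiple[where c = 9])
  moreover have "[dilate 3 A * cyc_conj 143 A = 0] (mod int 3 * int 3, 143)"
    using A by (intro multiplier_mod_prime_square[where f = 15 and j = 1])
      (auto intro: cyc_cong_const_multiple[where c = 4])
  moreover have "coprime (4 :: int) 9"
    by (simp add: coprime_iff_gcd_eq_1 gcd_non_0_int)
  ultimately show ?thesis
    using cyc_cong_coprime_modulus[of 4 9] by simp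
qed

lemma CW_143_36_dilate_3:
  assumes A: "[A * cyc_conj 143 A = [:36:]] (mod 0, 143)"
  obtains s g where "s = 1 \<or> s = -1" "g < 143" "[dilate 3 A = monom s g * A] (mod 0, 143)"
proof -
  define C where "C = dilate 3 A * cyc_conj 143 A"
  obtain R S where "C - 0 = smult 36 R + (monom 1 143 - 1) * S"
    using CW_143_36_multiplier_3[OF A] unfolding C_def cyc_cong_def by blast
  then have CR: "[C = smult 36 R] (mod 0, 143)"
    unfolding cyc_cong_def by (intro exI[of _ 0] exI[of _ S]) simp
  have "C * cyc_conj 143 C = dilate 3 (A * cyc_conj 143 A) * (cyc_conj 143 (cyc_conj 143 A) * cyc_conj 143 A)"
    unfolding C_def by (simp add: dilate_cyc_conj mult_ac)
  also have "[\<dots> = dilate 3 [:36:] * (A * cyc_conj 143 A)] (mod 0, 143)"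
    by (intro cyc_cong_mult cyc_cong_dilate A cyc_cong_cyc_conj_cyc_conj cyc_cong_refl) simp
  also have "[\<dots> = dilate 3 [:36:] * [:36:]] (mod 0, 143)"
    by (intro cyc_cong_mult cyc_cong_refl A)
  finally have CC: "[C * cyc_conj 143 C = [:36 * 36:]] (mod 0, 143)"
    by simp
  have "[smult (36 * 36) (R * cyc_conj 143 R) = C * cyc_conj 143 C] (mod 0, 143)"
    using cyc_cong_mult[OF CR cyc_cong_cyc_conj[OF CR]] by (simp add: cyc_cong_sym)
  also note CC
  finally have "[smult (36 * 36) (R * cyc_conj 143 R) - smult (36 * 36) 1 = 0] (mod 0, 143)"
    by (simp add: cyc_cong_iff_diff[THEN iffD1])
  then have "[smult (36 * 36) (R * cyc_conj 143 R - 1) = 0] (mod 0, 143)"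
    by (simp only: smult_diff_right)
  then have "[R * cyc_conj 143 R - 1 = 0] (mod 0, 143)"
    by (rule cyc_cong_smult_cancel[rotated 2]) simp_all
  then have RR: "[R * cyc_conj 143 R = 1] (mod 0, 143)"
    by (rule cyc_cong_iff_diff[THEN iffD2])
  obtain s g where s: "s = 1 \<or> s = -1" "g < 143" and R: "[R = monom s g] (mod 0, 143)"
    by (rule cyc_cong_unit_monomial[OF _ RR]) simp_all
  have "smult 36 (dilate 3 A) = dilate 3 A * [:36:]"
    by simp
  also have "[\<dots> = dilate 3 A * (A * cyc_conj 143 A)] (mod 0, 143)"
    by (intro cyc_cong_mult cyc_cong_refl cyc_cong_sym[OF A])
  also have "dilate 3 A * (A * cyc_conj 143 A) = C * A"
    unfolding C_def by (simp add: mult_ac)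
  also have "[\<dots> = smult 36 R * A] (mod 0, 143)"
    by (intro cyc_cong_mult cyc_cong_refl CR)
  also have "[\<dots> = smult 36 (monom s g * A)] (mod 0, 143)"
    using cyc_cong_mult[OF cyc_cong_smult[OF R] cyc_cong_refl] by simp
  finally have "[smult 36 (dilate 3 A - monom s g * A) = 0] (mod 0, 143)"
    by (simp add: smult_diff_right flip: cyc_cong_iff_diff)
  then have "[dilate 3 A - monom s g * A = 0] (mod 0, 143)"
    by (rule cyc_cong_smult_cancel[rotated 2]) simp_all
  then have "[dilate 3 A = monom s g * A] (mod 0, 143)"
    by (rule cyc_cong_iff_diff[THEN iffD2])
  with s show ?thesis
    by (rule that)
qed

lemma CW_143_36_invariant_row:
  assumes W: "is_CW 143 36 W"
  obtains b where "\<And>i. i < 143 \<Longrightarrow> b i \<in> {-1, 0, 1}" "\<And>i. i < 143 \<Longrightarrow> b (3 * i mod 143) = b i"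
    "[cyc_poly 143 b * cyc_conj 143 (cyc_poly 143 b) = [:36:]] (mod 0, 143)"
proof -
  define A where "A = cyc_poly 143 (W 0)"
  have AA: "[A * cyc_conj 143 A = [:36:]] (mod 0, 143)"
    using is_CW_row_poly[OF W] by (simp add: A_def)
  obtain s g where s: "s = 1 \<or> s = -1" and g: "g < 143"
    and dil: "[dilate 3 A = monom s g * A] (mod 0, 143)"
    using CW_143_36_dilate_3[OF AA] .
  define h where "h = (143 - g) * 72 mod 143"
  have h: "h < 143"
    by (simp add: h_def)
  have "(h * 3 + g) mod 143 = ((143 - g) * 72 * 3 + g) mod 143"
    unfolding h_def by (metis mod_add_left_eq mod_mult_left_eq)
  also have "(143 - g) * 72 * 3 + g = (143 - g) * 72 + 143 * (144 - g)"
    using g by simp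
  finally have "(h * 3 + g) mod 143 = h mod 143"
    unfolding h_def by simp
  then have fixed: "[dilate 3 (monom 1 h * A) = smult s (monom 1 h * A)] (mod 0, 143)"
    by (rule multiplier_fixes_translate[OF dil])
  define b where "b i = W 0 ((i + (143 - h)) mod 143)" for i
  have B: "[monom 1 h * A = cyc_poly 143 b] (mod 0, 143)"
    unfolding A_def b_def using h by (intro cyc_cong_monom_mult_cyc_poly) simp_all
  have "[cyc_poly 143 b * cyc_conj 143 (cyc_poly 143 b)
      = (monom 1 h * A) * cyc_conj 143 (monom 1 h * A)] (mod 0, 143)"
    by (intro cyc_cong_mult cyc_cong_cyc_conj cyc_cong_sym[OF B])
  also have "\<dots> = monom 1 (h * 143) * (A * cyc_conj 143 A)"
    by (simp add: cyc_conj_def mult_monom mult_ac)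
  also have "[\<dots> = monom 1 0 * [:36:]] (mod 0, 143)"
    by (intro cyc_cong_mult cyc_cong_monom_eq_mod AA) simp
  finally have BB: "[cyc_poly 143 b * cyc_conj 143 (cyc_poly 143 b) = [:36:]] (mod 0, 143)"
    by simp
  have sign: "b (48 * i mod 143) = s * b i" if "i < 143" for i
  proof -
    have "[cyc_poly 143 (\<lambda>i. b (48 * i mod 143)) = dilate 3 (cyc_poly 143 b)] (mod 0, 143)"
      by (intro cyc_cong_sym[OF cyc_cong_dilate_cyc_poly]) simp_all
    also have "[\<dots> = dilate 3 (monom 1 h * A)] (mod 0, 143)"
      by (intro cyc_cong_dilate cyc_cong_sym[OF B])
    also have "[\<dots> = smult s (monom 1 h * A)] (mod 0, 143)"
      by (rule fixed)
    also have "[\<dots> = smult s (cyc_poly 143 b)] (mod 0, 143)"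
      by (intro cyc_cong_smult B)
    also have "smult s (cyc_poly 143 b) = cyc_poly 143 (\<lambda>i. s * b i)"
      by (rule smult_cyc_poly)
    finally have "[cyc_poly 143 (\<lambda>i. b (48 * i mod 143)) = cyc_poly 143 (\<lambda>i. s * b i)] (mod 0, 143)" .
    from cyc_cong_cyc_poly_eq[OF _ this that] show ?thesis
      by simp
  qed
  have "s = 1"
  proof (rule ccontr)
    assume "s \<noteq> 1"
    with s have "s ^ 15 = -1"
      by simp
    have cycle: "48 ^ 15 * i mod 143 = i" if "i < 143" for i :: nat
    proof -
      have "48 ^ 15 * i mod 143 = (48 ^ 15 mod 143) * i mod 143"
        by (rule mod_mult_left_eq[symmetric])
      also have "\<dots> = i"
        using that by simp
      finally show ?thesis .
    qed
    have "b i = 0" if "i < 143" for i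
      using mult_invariant_iterate[where n = 143 and c = 48 and k = 15 and b = b and s = s, OF _ sign that]
        \<open>s ^ 15 = -1\<close> cycle[OF that] by simp
    then have "periodic_autocorr 143 b 0 = 0"
      unfolding periodic_autocorr_def by simp
    with periodic_autocorr_eq[OF _ BB] show False
      by simp
  qed
  show ?thesis
  proof (rule that)
    have entries: "\<forall>i < 143. \<forall>j < 143. W i j \<in> {0, 1, -1}"
      using W unfolding is_CW_def by (elim conjE) assumption
    show "b i \<in> {-1, 0, 1}" for i
      using entries[rule_format, of 0 "(i + (143 - h)) mod 143"] unfolding b_def by auto
    show "b (3 * i mod 143) = b i" if "i < 143" for i
    proof -
      have "48 * (3 * i mod 143) mod 143 = (i + 143 * i) mod 143"
        by (simp add: mod_mult_right_eq)
      also have "\<dots> = i"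
        using that by (simp only: mod_mult_self2 mod_less)
      finally have "48 * (3 * i mod 143) mod 143 = i" .
      then show ?thesis
        using sign[of "3 * i mod 143"] \<open>s = 1\<close> by simp
    qed
  qed (rule BB)
qed

lemma bij_betw_mod_pair:
  fixes m n :: nat
  assumes "coprime m n"
  shows "bij_betw (\<lambda>i. (i mod m, i mod n)) {..<m * n} ({..<m} \<times> {..<n})"
proof -
  have inj: "inj_on (\<lambda>i. (i mod m, i mod n)) {..<m * n}"
  proof (rule inj_onI)
    have ordered: "i = j"
      if "i < m * n" "j < m * n" "i \<le> j" "i mod m = j mod m" "i mod n = j mod n" for i j
    proof -
      have "m dvd j - i" "n dvd j - i"
        using that(4,5) mod_eq_dvd_iff_nat[OF that(3), of m] mod_eq_dvd_iff_nat[OF that(3), of n]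
        by simp_all
      then have "m * n dvd j - i"
        using assms by (rule divides_mult)
      moreover have "j - i < m * n"
        using that by linarith
      ultimately have "\<not> 0 < j - i"
        using dvd_imp_le[of "m * n" "j - i"] by auto
      then show ?thesis
        using that(3) by simp
    qed
    show "i = j" if "i \<in> {..<m * n}" "j \<in> {..<m * n}"
      "(i mod m, i mod n) = (j mod m, j mod n)" for i j
    proof (cases "i \<le> j")
      case True
      show ?thesis
        by (rule ordered) (use that True in auto)
    next
      case False
      show ?thesis
        by (rule ordered[of j i, symmetric]) (use that False in auto)
    qed
  qed
  moreover have "(\<lambda>i. (i mod m, i mod n)) ` {..<m * n} = {..<m} \<times> {..<n}"
  proof (rule card_subset_eq)
    have "0 < m" "0 < n" if "i < m * n" for i
      using that by (cases "m = 0"; cases "n = 0"; simp)+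
    then show "(\<lambda>i. (i mod m, i mod n)) ` {..<m * n} \<subseteq> {..<m} \<times> {..<n}"
      by auto
    show "card ((\<lambda>i. (i mod m, i mod n)) ` {..<m * n}) = card ({..<m} \<times> {..<n})"
      using card_image[OF inj] by (simp add: card_cartesian_product)
  qed simp
  ultimately show ?thesis
    unfolding bij_betw_def ..
qed

lemma sum_mod_pair:
  fixes m n :: nat
  assumes "coprime m n"
  shows "(\<Sum>i<m * n. f (i mod m) (i mod n)) = (\<Sum>y<m. \<Sum>z<n. f y z)"
  using sum.reindex_bij_betw[OF bij_betw_mod_pair[OF assms], of "\<lambda>(y, z). f y z"]
  by (simp add: sum.cartesian_product)

lemma mod_pair_factor:
  fixes m n :: nat
  assumes "coprime m n"
  obtains \<beta> where "\<And>i. i < m * n \<Longrightarrow> b i = \<beta> (i mod m) (i mod n)"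
proof -
  define \<beta> where "\<beta> y z = b (the_inv_into {..<m * n} (\<lambda>i. (i mod m, i mod n)) (y, z))" for y z
  have "b i = \<beta> (i mod m) (i mod n)" if "i < m * n" for i
    using the_inv_into_f_f[OF bij_betw_imp_inj_on[OF bij_betw_mod_pair[OF assms]], of i] that
    unfolding \<beta>_def by simp
  then show ?thesis
    by (rule that)
qed

lemma mod_pair_surj:
  fixes m n :: nat
  assumes "coprime m n" "y < m" "z < n"
  obtains i where "i < m * n" "i mod m = y" "i mod n = z"
proof -
  have "(y, z) \<in> {..<m} \<times> {..<n}"
    using assms(2,3) by simp
  also have "{..<m} \<times> {..<n} = (\<lambda>i. (i mod m, i mod n)) ` {..<m * n}"
    by (rule bij_betw_imp_surj_on[OF bij_betw_mod_pair[OF assms(1)], symmetric])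
  finally obtain i where "i \<in> {..<m * n}" "(y, z) = (i mod m, i mod n)"
    by (rule imageE)
  then show ?thesis
    using that by simp
qed

lemma mod_pair_factor_mult_invariant:
  fixes m n c :: nat
  assumes mn: "coprime m n" and factor: "\<And>i. i < m * n \<Longrightarrow> b i = \<beta> (i mod m) (i mod n)"
    and inv: "\<And>i. i < m * n \<Longrightarrow> b (c * i mod (m * n)) = b i" and yz: "y < m" "z < n"
  shows "\<beta> (c * y mod m) (c * z mod n) = \<beta> y z"
proof -
  obtain i where i: "i < m * n" "i mod m = y" "i mod n = z"
    using mod_pair_surj[OF mn yz] .
  have "0 < m * n"
    using i(1) by linarith
  then have "b (c * i mod (m * n)) = \<beta> (c * i mod (m * n) mod m) (c * i mod (m * n) mod n)"
    by (intro factor) simp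
  also have "\<dots> = \<beta> (c * y mod m) (c * z mod n)"
    unfolding i(2,3)[symmetric] by (simp add: mod_mod_cancel mod_mult_right_eq)
  finally show ?thesis
    using inv[OF i(1)] factor[OF i(1)] i(2,3) by simp
qed

lemma sum_mod_11_mult_3_invariant:
  fixes g :: "nat \<Rightarrow> int"
  assumes "\<And>y. y < 11 \<Longrightarrow> g (3 * y mod 11) = g y"
  shows "(\<Sum>y<11. g y) = g 0 + 5 * (g 1 + g 2)"
proof -
  have "g 3 = g 1" "g 9 = g 1" "g 5 = g 1" "g 4 = g 1" "g 6 = g 2" "g 7 = g 2" "g 10 = g 2" "g 8 = g 2"
    using assms[of 1] assms[of 3] assms[of 9] assms[of 5] assms[of 2] assms[of 6] assms[of 7]
      assms[of 10] by simp_all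
  then show ?thesis
    by (simp add: lessThan_nat_numeral)
qed

lemma sum_mod_13_mult_3_invariant:
  fixes g :: "nat \<Rightarrow> int"
  assumes "\<And>z. z < 13 \<Longrightarrow> g (3 * z mod 13) = g z"
  shows "(\<Sum>z<13. g z) = g 0 + 3 * (g 1 + g 2 + g 4 + g 7)"
proof -
  have "g 3 = g 1" "g 9 = g 1" "g 6 = g 2" "g 5 = g 2" "g 12 = g 4" "g 10 = g 4" "g 8 = g 7" "g 11 = g 7"
    using assms[of 1] assms[of 3] assms[of 2] assms[of 6] assms[of 4] assms[of 12] assms[of 7]
      assms[of 8] by simp_all
  then show ?thesis
    by (simp add: lessThan_nat_numeral)
qed

lemma unit_pair_cancel:
  fixes x u v :: int
  assumes "x \<in> {-1, 0, 1}" "u \<in> {-1, 0, 1}" "v \<in> {-1, 0, 1}" "(x + 5 * (u + v))\<^sup>2 \<le> 12"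
  shows "u + v = 0"
  using assms by auto

lemma opposite_sums_vanish:
  fixes p q s :: int
  assumes "p \<in> {-1, 0, 1}" "q \<in> {-1, 0, 1}" "5 * (p + 3 * s)\<^sup>2 + 5 * (q - 3 * s)\<^sup>2 \<le> 36"
  shows "s = 0"
proof (rule ccontr)
  assume "s \<noteq> 0"
  then have "2 \<le> \<bar>p + 3 * s\<bar>" "2 \<le> \<bar>q - 3 * s\<bar>"
    using assms(1,2) by auto
  then have "2\<^sup>2 \<le> (p + 3 * s)\<^sup>2" "2\<^sup>2 \<le> (q - 3 * s)\<^sup>2"
    using abs_le_square_iff[of 2 "p + 3 * s"] abs_le_square_iff[of 2 "q - 3 * s"] by simp_all
  with assms(3) show False
    by simp
qed

lemma zero_sum_squares:
  fixes a b c d :: int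
  assumes "a \<in> {-1, 0, 1}" "b \<in> {-1, 0, 1}" "c \<in> {-1, 0, 1}" "d \<in> {-1, 0, 1}" "a + b + c + d = 0"
  shows "a\<^sup>2 + b\<^sup>2 + c\<^sup>2 + d\<^sup>2 \<in> {0, 2, 4}"
  using assms by auto

lemma orbit_values_impossible:
  fixes \<beta> :: "nat \<Rightarrow> nat \<Rightarrow> int"
  defines "Z \<equiv> {1, 2, 4, 7}"
  assumes vals: "\<And>y z. y \<in> {0, 1, 2} \<Longrightarrow> z \<in> insert 0 Z \<Longrightarrow> \<beta> y z \<in> {-1, 0, 1}"
    and weight: "(\<beta> 0 0)\<^sup>2 + 3 * (\<Sum>z\<in>Z. (\<beta> 0 z)\<^sup>2)
      + 5 * ((\<beta> 1 0)\<^sup>2 + 3 * (\<Sum>z\<in>Z. (\<beta> 1 z)\<^sup>2) + (\<beta> 2 0)\<^sup>2 + 3 * (\<Sum>z\<in>Z. (\<beta> 2 z)\<^sup>2)) = 36"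
    and proj13: "(\<beta> 0 0 + 5 * (\<beta> 1 0 + \<beta> 2 0))\<^sup>2 + 3 * (\<Sum>z\<in>Z. (\<beta> 0 z + 5 * (\<beta> 1 z + \<beta> 2 z))\<^sup>2) = 36"
    and proj11: "(\<beta> 0 0 + 3 * (\<Sum>z\<in>Z. \<beta> 0 z))\<^sup>2
      + 5 * ((\<beta> 1 0 + 3 * (\<Sum>z\<in>Z. \<beta> 1 z))\<^sup>2 + (\<beta> 2 0 + 3 * (\<Sum>z\<in>Z. \<beta> 2 z))\<^sup>2) = 36"
  shows False
proof -
  have Z: "finite Z" "0 \<notin> Z"
    by (simp_all add: Z_def)
  have sq: "0 \<le> (\<beta> y z)\<^sup>2" "(\<beta> y z)\<^sup>2 \<le> 1" if "y \<in> {0, 1, 2}" "z \<in> insert 0 Z" for y z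
    using vals[OF that] by auto
  have pair: "\<beta> 1 z + \<beta> 2 z = 0" if z: "z \<in> Z" for z
  proof (rule unit_pair_cancel)
    have "(\<beta> 0 z + 5 * (\<beta> 1 z + \<beta> 2 z))\<^sup>2 \<le> (\<Sum>z\<in>Z. (\<beta> 0 z + 5 * (\<beta> 1 z + \<beta> 2 z))\<^sup>2)"
      using Z z by (intro member_le_sum) simp_all
    then show "(\<beta> 0 z + 5 * (\<beta> 1 z + \<beta> 2 z))\<^sup>2 \<le> 12"
      using proj13 by (smt (verit) zero_le_power2)
  qed (use vals z in auto)
  define \<sigma> where "\<sigma> = (\<Sum>z\<in>Z. \<beta> 1 z)"
  have "(\<Sum>z\<in>Z. \<beta> 1 z + \<beta> 2 z) = 0"
    using pair by (intro sum.neutral) simp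
  then have "(\<Sum>z\<in>Z. \<beta> 2 z) = - \<sigma>"
    unfolding \<sigma>_def sum.distrib by linarith
  then have "5 * (\<beta> 1 0 + 3 * \<sigma>)\<^sup>2 + 5 * (\<beta> 2 0 - 3 * \<sigma>)\<^sup>2 \<le> 36"
    using proj11 unfolding \<sigma>_def by (smt (verit) zero_le_power2)
  then have "\<sigma> = 0"
    using vals by (intro opposite_sums_vanish[of "\<beta> 1 0" "\<beta> 2 0"]) auto
  then have "\<beta> 1 1 + \<beta> 1 2 + \<beta> 1 4 + \<beta> 1 7 = 0"
    unfolding \<sigma>_def Z_def by (simp add: add.assoc)
  then have "(\<beta> 1 1)\<^sup>2 + (\<beta> 1 2)\<^sup>2 + (\<beta> 1 4)\<^sup>2 + (\<beta> 1 7)\<^sup>2 \<in> {0, 2, 4}"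
    by (intro zero_sum_squares) (use vals in \<open>simp_all add: Z_def\<close>)
  then have units: "(\<Sum>z\<in>Z. (\<beta> 1 z)\<^sup>2) \<in> {0, 2, 4}"
    by (simp add: Z_def add.assoc)
  have same: "(\<Sum>z\<in>Z. (\<beta> 2 z)\<^sup>2) = (\<Sum>z\<in>Z. (\<beta> 1 z)\<^sup>2)"
    using pair by (intro sum.cong) (simp_all add: eq_neg_iff_add_eq_0[symmetric])
  have rest: "0 \<le> (\<beta> 0 0)\<^sup>2 + 3 * (\<Sum>z\<in>Z. (\<beta> 0 z)\<^sup>2) + 5 * ((\<beta> 1 0)\<^sup>2 + (\<beta> 2 0)\<^sup>2)"
    "(\<beta> 0 0)\<^sup>2 + 3 * (\<Sum>z\<in>Z. (\<beta> 0 z)\<^sup>2) + 5 * ((\<beta> 1 0)\<^sup>2 + (\<beta> 2 0)\<^sup>2) \<le> 23" "(\<beta> 0 0)\<^sup>2 + 3 * (\<Sum>z\<in>Z. (\<beta> 0 z)\<^sup>2) + 5 * ((\<beta> 1 0)\<^sup>2 + (\<beta> 2 0)\<^sup>2) \<le> 23"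
    using sq[of 0 0] sq[of 1 0] sq[of 2 0] sq[of 0 1] sq[of 0 2] sq[of 0 4] sq[of 0 7]
    by (simp_all add: Z_def)
  from units consider "(\<Sum>z\<in>Z. (\<beta> 1 z)\<^sup>2) = 0" | "(\<Sum>z\<in>Z. (\<beta> 1 z)\<^sup>2) = 2"
    | "(\<Sum>z\<in>Z. (\<beta> 1 z)\<^sup>2) = 4"
    by blast
  then show False
    using weight same rest unfolding distrib_left by cases linarith+
qed

lemma mult_3_invariant_impossible:
  fixes \<beta> :: "nat \<Rightarrow> nat \<Rightarrow> int"
  assumes vals: "\<And>y z. y < 11 \<Longrightarrow> z < 13 \<Longrightarrow> \<beta> y z \<in> {-1, 0, 1}"
    and inv11: "\<And>y z. y < 11 \<Longrightarrow> z < 13 \<Longrightarrow> \<beta> (3 * y mod 11) z = \<beta> y z"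
    and inv13: "\<And>y z. y < 11 \<Longrightarrow> z < 13 \<Longrightarrow> \<beta> y (3 * z mod 13) = \<beta> y z"
    and weight: "(\<Sum>y<11. \<Sum>z<13. (\<beta> y z)\<^sup>2) = 36"
    and proj13: "(\<Sum>z<13. (\<Sum>y<11. \<beta> y z)\<^sup>2) = 36"
    and proj11: "(\<Sum>y<11. (\<Sum>z<13. \<beta> y z)\<^sup>2) = 36"
  shows False
proof -
  have row: "(\<Sum>z<13. f (\<beta> y z)) = f (\<beta> y 0) + 3 * (f (\<beta> y 1) + f (\<beta> y 2) + f (\<beta> y 4) + f (\<beta> y 7))"
    if "y < 11" for y and f :: "int \<Rightarrow> int"
    using inv13[OF that] by (intro sum_mod_13_mult_3_invariant) simp
  have column: "(\<Sum>y<11. f (\<beta> y z)) = f (\<beta> 0 z) + 5 * (f (\<beta> 1 z) + f (\<beta> 2 z))"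
    if "z < 13" for z and f :: "int \<Rightarrow> int"
    using inv11[OF _ that] by (intro sum_mod_11_mult_3_invariant) simp
  have "(\<Sum>y<11. \<Sum>z<13. (\<beta> y z)\<^sup>2)
      = (\<Sum>y<11. (\<beta> y 0)\<^sup>2 + 3 * ((\<beta> y 1)\<^sup>2 + (\<beta> y 2)\<^sup>2 + (\<beta> y 4)\<^sup>2 + (\<beta> y 7)\<^sup>2))"
    using row[of _ "\<lambda>x. x\<^sup>2"] by simp
  also have "\<dots> = (\<beta> 0 0)\<^sup>2 + 3 * ((\<beta> 0 1)\<^sup>2 + (\<beta> 0 2)\<^sup>2 + (\<beta> 0 4)\<^sup>2 + (\<beta> 0 7)\<^sup>2)
      + 5 * ((\<beta> 1 0)\<^sup>2 + 3 * ((\<beta> 1 1)\<^sup>2 + (\<beta> 1 2)\<^sup>2 + (\<beta> 1 4)\<^sup>2 + (\<beta> 1 7)\<^sup>2)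
        + ((\<beta> 2 0)\<^sup>2 + 3 * ((\<beta> 2 1)\<^sup>2 + (\<beta> 2 2)\<^sup>2 + (\<beta> 2 4)\<^sup>2 + (\<beta> 2 7)\<^sup>2)))"
    using inv11 by (intro sum_mod_11_mult_3_invariant) simp
  finally have W: "\<dots> = 36"
    using weight by simp
  have "(\<Sum>z<13. (\<Sum>y<11. \<beta> y z)\<^sup>2) = (\<Sum>z<13. (\<beta> 0 z + 5 * (\<beta> 1 z + \<beta> 2 z))\<^sup>2)"
    using column[of _ "\<lambda>x. x"] by simp
  also have "\<dots> = (\<beta> 0 0 + 5 * (\<beta> 1 0 + \<beta> 2 0))\<^sup>2 + 3 * ((\<beta> 0 1 + 5 * (\<beta> 1 1 + \<beta> 2 1))\<^sup>2
      + (\<beta> 0 2 + 5 * (\<beta> 1 2 + \<beta> 2 2))\<^sup>2 + (\<beta> 0 4 + 5 * (\<beta> 1 4 + \<beta> 2 4))\<^sup>2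
      + (\<beta> 0 7 + 5 * (\<beta> 1 7 + \<beta> 2 7))\<^sup>2)"
    using inv13 by (intro sum_mod_13_mult_3_invariant) simp
  finally have P13: "\<dots> = 36"
    using proj13 by simp
  have "(\<Sum>y<11. (\<Sum>z<13. \<beta> y z)\<^sup>2)
      = (\<Sum>y<11. (\<beta> y 0 + 3 * (\<beta> y 1 + \<beta> y 2 + \<beta> y 4 + \<beta> y 7))\<^sup>2)"
    using row[of _ "\<lambda>x. x"] by simp
  also have "\<dots> = (\<beta> 0 0 + 3 * (\<beta> 0 1 + \<beta> 0 2 + \<beta> 0 4 + \<beta> 0 7))\<^sup>2
      + 5 * ((\<beta> 1 0 + 3 * (\<beta> 1 1 + \<beta> 1 2 + \<beta> 1 4 + \<beta> 1 7))\<^sup>2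
        + (\<beta> 2 0 + 3 * (\<beta> 2 1 + \<beta> 2 2 + \<beta> 2 4 + \<beta> 2 7))\<^sup>2)"
    using inv11 by (intro sum_mod_11_mult_3_invariant) simp
  finally have P11: "\<dots> = 36"
    using proj11 by simp
  show False
  proof (rule orbit_values_impossible)
    show "\<beta> y z \<in> {-1, 0, 1}" if "y \<in> {0, 1, 2}" "z \<in> insert 0 {1, 2, 4, 7}" for y z
      using that by (intro vals) auto
  qed (use W P13 P11 in \<open>simp_all add: add.assoc\<close>)
qed

lemma CW_143_36_no_invariant_row:
  fixes b :: "nat \<Rightarrow> int"
  assumes vals: "\<And>i. i < 143 \<Longrightarrow> b i \<in> {-1, 0, 1}"
    and inv: "\<And>i. i < 143 \<Longrightarrow> b (3 * i mod 143) = b i"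
    and B: "[cyc_poly 143 b * cyc_conj 143 (cyc_poly 143 b) = [:36:]] (mod 0, 143)"
  shows False
proof -
  have mn: "coprime (11 :: nat) 13"
    by (simp add: coprime_iff_gcd_eq_1 gcd_non_0_nat)
  have prod: "(11 :: nat) * 13 = 143"
    by simp
  obtain \<beta> where factor: "\<And>i. i < 143 \<Longrightarrow> b i = \<beta> (i mod 11) (i mod 13)"
    using mod_pair_factor[OF mn, unfolded prod, where b = b] by blast
  have inv1: "b (3 * i mod 143) = 1 * b i" if "i < 143" for i
    using inv[OF that] by simp
  have power_inv: "b (3 ^ k * i mod 143) = b i" if "i < 143" for k i
    using mult_invariant_iterate[where n = 143 and c = 3 and s = 1 and b = b, OF _ inv1 that, of k]
    by simp
  note factor_invariant = mod_pair_factor_mult_invariant[OF mn, unfolded prod, where b = b and \<beta> = \<beta>]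
  show False
  proof (rule mult_3_invariant_impossible)
    show "\<beta> y z \<in> {-1, 0, 1}" if yz: "y < 11" "z < 13" for y z
    proof -
      obtain i where "i < 143" "i mod 11 = y" "i mod 13 = z"
        using mod_pair_surj[OF mn yz, unfolded prod] .
      then show ?thesis
        using factor vals by metis
    qed
    show "\<beta> (3 * y mod 11) z = \<beta> y z" if "y < 11" "z < 13" for y z
    proof -
      have "3 ^ 6 * y mod 11 = 3 * y mod 11" "3 ^ 6 * z mod 13 = z"
        using that(2) mod_mult_left_eq[of 729 11 y] mod_mult_left_eq[of 729 13 z] by simp_all
      then show ?thesis
        using factor_invariant[where c = "3 ^ 6", OF factor power_inv that] by simp
    qed
    show "\<beta> y (3 * z mod 13) = \<beta> y z" if "y < 11" "z < 13" for y z
    proof -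
      have "3 ^ 10 * y mod 11 = y" "3 ^ 10 * z mod 13 = 3 * z mod 13"
        using that(1) mod_mult_left_eq[of 59049 11 y] mod_mult_left_eq[of 59049 13 z] by simp_all
      then show ?thesis
        using factor_invariant[where c = "3 ^ 10", OF factor power_inv that] by simp
    qed
    note sum_pairs = sum_mod_pair[OF mn, unfolded prod]
    have factor_sum: "(\<Sum>i<143. f i (b i)) = (\<Sum>i<143. f i (\<beta> (i mod 11) (i mod 13)))" for f
      by (intro sum.cong) (simp_all add: factor)
    have "(\<Sum>i<143. (b i)\<^sup>2) = 36"
      using periodic_autocorr_eq[OF _ B, of 0] by (simp add: periodic_autocorr_def power2_eq_square)
    then show "(\<Sum>y<11. \<Sum>z<13. (\<beta> y z)\<^sup>2) = 36"
      using sum_pairs[of "\<lambda>y z. (\<beta> y z)\<^sup>2"] factor by simp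
    have "(\<Sum>i<143. if i mod 13 = z then b i else 0) = (\<Sum>y<11. \<beta> y z)" if "z < 13" for z
      using factor_sum[of "\<lambda>i x. if i mod 13 = z then x else 0"]
        sum_pairs[of "\<lambda>y z'. if z' = z then \<beta> y z' else 0"] that
      by (simp add: sum.delta')
    then show "(\<Sum>z<13. (\<Sum>y<11. \<beta> y z)\<^sup>2) = 36"
      using projection_energy[of 13 143 b 36] B by simp
    have "(\<Sum>i<143. if i mod 11 = y then b i else 0) = (\<Sum>z<13. \<beta> y z)" if "y < 11" for y
    proof -
      have "(\<Sum>y'<11. \<Sum>z<13. if y' = y then \<beta> y' z else 0) = (\<Sum>z<13. \<beta> y z)"
        using that by (subst sum.swap) (simp add: sum.delta')
      then show ?thesis
        using factor_sum[of "\<lambda>i x. if i mod 11 = y then x else 0"]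
          sum_pairs[of "\<lambda>y' z. if y' = y then \<beta> y' z else 0"] by simp
    qed
    then show "(\<Sum>y<11. (\<Sum>z<13. \<beta> y z)\<^sup>2) = 36"
      using projection_energy[of 11 143 b 36] B by simp
  qed
qed

theorem proposition5:
  shows "\<not> (\<exists>W. is_CW 143 36 W)"
proof
  assume "\<exists>W. is_CW 143 36 W"
  then obtain W where "is_CW 143 36 W" ..
  then show False
    by (rule CW_143_36_invariant_row) (rule CW_143_36_no_invariant_row)
qed

end
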